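(* Let $G$ be a finite group, $P$ a normal $p$-subgroup of $G$ and $R\trianglelefteq G$ with $R\le P$ such that $P/R$ is a chief factor of $G$ of order $p^n$ with $n>1$. Suppose that every normal subgroup $V$ of $G$ with $V<P$ satisfies $V\le R$. Let $H$ be a subgroup of $P$ with $R<RH<P$ such that $H$ is cyclic of prime order or of order $4$. If $T$ is a subgroup of $G$ with $HT=G$, then $T=G$. *)

theory Defs
  imports "HOL-Algebra.Algebra"
begin

definition chief_factor :: "('a, 'b) monoid_scheme \<Rightarrow> 'a set \<Rightarrow> 'a set \<Rightarrow> bool" where
  "chief_factor G P R \<longleftrightarrow> P \<lhd> G \<and> R \<lhd> G \<and> R \<subset> P \<and>
     (\<forall>N. N \<lhd> G \<and> R \<subseteq> N \<and> N \<subseteq> P \<longrightarrow> N = R \<or> N = P)"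

end

theory Submission
  imports Defs
begin

(*
  Let P be a finite normal p-subgroup of G and HT = G with H \<subseteq> P.  If T were proper,
  then P is not contained in T, and a subgroup Y of P that is maximal among the proper
  subgroups containing P \<inter> T and normalized by T must be normal in P, because
  normalizers grow in p-groups.  Being normalized by H \<subseteq> P and by T, the subgroup Y is
  normal in HT = G, so Y \<subseteq> R by hypothesis; but P = H(P \<inter> T) \<subseteq> HY \<subseteq> RH, contradicting
  RH \<subset> P.
*)

text \<open>In an action of a p-group, every orbit other than a fixed point has size divisible
  by p: by the orbit-stabilizer theorem its size divides the group order.\<close>
lemma (in group_action) prime_dvd_card_orbit:
  fixes p :: nat
  assumes p: "Factorial_Ring.prime p" and ord: "order G = p ^ k"
    and x: "x \<in> E" and nontrivial: "orbit G \<phi> x \<noteq> {x}"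
  shows "p dvd card (orbit G \<phi> x)"
proof -
  have "card (orbit G \<phi> x) dvd p ^ k"
    using orbit_stabilizer_theorem[OF x] ord by (metis dvd_triv_left)
  then obtain i where i: "card (orbit G \<phi> x) = p ^ i"
    using divides_primepow_nat[OF p] by blast
  have "i \<noteq> 0"
  proof
    assume "i = 0"
    hence "card (orbit G \<phi> x) = 1" using i by simp
    hence "orbit G \<phi> x = {x}" using orbit_refl[OF x] by (metis card_1_singletonE singletonD)
    thus False using nontrivial by simp
  qed
  thus ?thesis using i by (simp add: dvd_power)
qed

text \<open>Fixed-point congruence: when a finite p-group acts on a finite set, the number of
  points is congruent modulo p to the number of fixed points, because every non-trivial
  orbit has size a positive power of p (orbit-stabilizer theorem).\<close>
lemma (in group_action) card_mod_prime_eq_card_fixed: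
  fixes p :: nat
  assumes finE: "finite E" and p: "Factorial_Ring.prime p" and ord: "order G = p ^ k"
  shows "card E mod p = card {x \<in> E. \<forall>g\<in>carrier G. \<phi> g x = x} mod p"
proof -
  define F where "F = {x \<in> E. \<forall>g\<in>carrier G. \<phi> g x = x}"
  have orbit_fixed: "orbit G \<phi> x = {x} \<longleftrightarrow> x \<in> F" if "x \<in> E" for x
    using that orbit_refl[OF that] unfolding F_def orbit_def by blast
  have orbit_dvd: "p dvd (\<Sum>y\<in>orbit G \<phi> x. if y \<in> F then 0 else 1)" if x: "x \<in> E" for x
  proof (cases "x \<in> F")
    case True
    then show ?thesis using orbit_fixed[OF x] by simp
  next
    case False
    have "y \<notin> F" if y: "y \<in> orbit G \<phi> x" for y
    proof
      assume "y \<in> F"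
      have "y \<in> E" using y x element_image unfolding orbit_def by blast
      hence "x \<in> orbit G \<phi> y" using orbit_sym[OF x _ y] by blast
      moreover have "orbit G \<phi> y = {y}" using orbit_fixed \<open>y \<in> E\<close> \<open>y \<in> F\<close> by blast
      ultimately show False using \<open>y \<in> F\<close> False by simp
    qed
    hence "(\<Sum>y\<in>orbit G \<phi> x. if y \<in> F then 0 else 1) = card (orbit G \<phi> x)"
      by simp
    thus ?thesis using prime_dvd_card_orbit[OF p ord x] False orbit_fixed[OF x] by simp
  qed
  have "card (E - F) = (\<Sum>y\<in>E. if y \<in> F then 0 else 1)"
    using finE by (simp add: sum.If_cases Diff_eq)
  also have "\<dots> = (\<Sum>orb\<in>orbits G E \<phi>. \<Sum>y\<in>orb. if y \<in> F then 0 else 1)"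
    using disjoint_sum[OF finE] by metis
  also have "p dvd (\<Sum>orb\<in>orbits G E \<phi>. \<Sum>y\<in>orb. if y \<in> F then 0 else 1)"
  proof (rule dvd_sum)
    fix orb assume "orb \<in> orbits G E \<phi>"
    then obtain x where "x \<in> E" "orb = orbit G \<phi> x" unfolding orbits_def by blast
    thus "p dvd (\<Sum>y\<in>orb. if y \<in> F then 0 else 1)" using orbit_dvd by simp
  qed
  finally have "p dvd card (E - F)" .
  moreover have "card E = card F + card (E - F)"
    using finE card_Diff_subset[of F E] card_mono[of E F] unfolding F_def by (simp add: finite_subset)
  ultimately have "card E mod p = card F mod p" by (auto elim!: dvdE)
  thus ?thesis unfolding F_def .
qed

lemma (in group) mem_normalizer_iff:
  assumes "K \<subseteq> carrier G" "x \<in> carrier G"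
  shows "x \<in> normalizer G K \<longleftrightarrow> (\<lambda>k. x \<otimes> k \<otimes> inv x) ` K = K"
proof -
  have "x <# K #> inv x = (\<lambda>k. x \<otimes> k \<otimes> inv x) ` K"
    unfolding l_coset_def r_coset_def by auto
  thus ?thesis using assms unfolding normalizer_def stabilizer_def by auto
qed

text \<open>For a finite set it suffices that conjugation maps the set into itself, since
  conjugation is injective.\<close>
lemma (in group) mem_normalizer_iff_finite:
  assumes "K \<subseteq> carrier G" "finite K" "x \<in> carrier G"
  shows "x \<in> normalizer G K \<longleftrightarrow> (\<forall>k\<in>K. x \<otimes> k \<otimes> inv x \<in> K)"
proof -
  have "inj_on (\<lambda>k. x \<otimes> k \<otimes> inv x) K"
    by (rule inj_onI) (use assms in \<open>simp add: subset_iff\<close>)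
  hence "(\<lambda>k. x \<otimes> k \<otimes> inv x) ` K = K \<longleftrightarrow> (\<lambda>k. x \<otimes> k \<otimes> inv x) ` K \<subseteq> K"
    using endo_inj_surj[OF assms(2)] by blast
  thus ?thesis
    using mem_normalizer_iff[OF assms(1,3)] by blast
qed

lemma (in group) subgroup_le_normalizer:
  assumes "subgroup K G"
  shows "K \<subseteq> normalizer G K"
proof
  fix x assume x: "x \<in> K"
  have "(\<lambda>k. x \<otimes> k \<otimes> inv x) ` K \<subseteq> K"
    using x assms by (auto simp: subgroup.m_closed subgroup.m_inv_closed)
  moreover have "k \<in> (\<lambda>k. x \<otimes> k \<otimes> inv x) ` K" if k: "k \<in> K" for k
  proof (rule image_eqI)
    have "x \<in> carrier G" "k \<in> carrier G" using x k subgroup.mem_carrier[OF assms] by auto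
    thus "k = x \<otimes> (inv x \<otimes> k \<otimes> x) \<otimes> inv x" by (simp add: m_assoc[symmetric]) (simp add: m_assoc)
    show "inv x \<otimes> k \<otimes> x \<in> K"
      using x k assms by (simp add: subgroup.m_closed subgroup.m_inv_closed)
  qed
  ultimately have "(\<lambda>k. x \<otimes> k \<otimes> inv x) ` K = K" by blast
  thus "x \<in> normalizer G K"
    using mem_normalizer_iff subgroup.subset[OF assms] subgroup.mem_carrier[OF assms x] by blast
qed

lemma (in group) normalizes_Int_normal:
  assumes P: "P \<lhd> G" "finite P" and K: "subgroup K G" and t: "t \<in> K"
  shows "t \<in> normalizer G (P \<inter> K)"
proof -
  have tc: "t \<in> carrier G" using subgroup.mem_carrier[OF K t] .
  have "t \<otimes> x \<otimes> inv t \<in> P \<inter> K" if x: "x \<in> P \<inter> K" for x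
  proof
    show "t \<otimes> x \<otimes> inv t \<in> P" using normal.inv_op_closed2[OF P(1) tc] x by simp
    show "t \<otimes> x \<otimes> inv t \<in> K" using t x K by (simp add: subgroup.m_closed subgroup.m_inv_closed)
  qed
  moreover have "P \<inter> K \<subseteq> carrier G" using K subgroup.subset by blast
  moreover have "finite (P \<inter> K)" using P(2) by simp
  ultimately show ?thesis using mem_normalizer_iff_finite[OF _ _ tc] by blast
qed

text \<open>An element g whose right coset Yg is fixed by right multiplication with Y
  normalizes the finite subgroup Y: from Ygy = Yg we get gyg\<inverse> \<in> Y.\<close>
lemma (in group) fixed_right_coset_normalizes:
  assumes Y: "subgroup Y G" "finite Y" and g: "g \<in> carrier G"
    and fixed: "\<And>y. y \<in> Y \<Longrightarrow> Y #> g #> y = Y #> g"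
  shows "g \<in> normalizer G Y"
proof -
  have Ysub: "Y \<subseteq> carrier G" using Y(1) subgroup.subset by blast
  have "g \<otimes> y \<otimes> inv g \<in> Y" if y: "y \<in> Y" for y
  proof -
    have yc: "y \<in> carrier G" using y Ysub by blast
    have "Y #> (g \<otimes> y) = Y #> g" using fixed[OF y] coset_mult_assoc[OF Ysub g yc] by simp
    hence "g \<otimes> y \<in> Y #> g" using rcos_self[OF _ Y(1)] g yc by (metis m_closed)
    thus ?thesis using subgroup.rcos_module_imp[OF Y(1) is_group g] by blast
  qed
  thus ?thesis using mem_normalizer_iff_finite[OF Ysub Y(2) g] by blast
qed

lemma (in group) right_coset_mult_closed:
  assumes Y: "subgroup Y G" and P: "subgroup P G"
    and S: "S \<in> {Y #> g | g. g \<in> P}" and x: "x \<in> P"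
  shows "S #> x \<in> {Y #> g | g. g \<in> P}"
proof -
  obtain g where g: "g \<in> P" "S = Y #> g" using S by blast
  have "S #> x = Y #> (g \<otimes> x)"
    using g x subgroup.subset[OF P] coset_mult_assoc[OF subgroup.subset[OF Y]] by auto
  thus ?thesis using g x subgroup.m_closed[OF P] by blast
qed

text \<open>A subgroup Y of P acts on the right cosets of Y in P by right multiplication
  (with the inverse, so that this is a left action).\<close>
lemma (in group) right_coset_action:
  assumes Y: "subgroup Y G" and P: "subgroup P G" and YP: "Y \<subseteq> P"
  defines "E \<equiv> {Y #> g | g. g \<in> P}"
  shows "group_action (G\<lparr>carrier := Y\<rparr>) E (\<lambda>y. \<lambda>S \<in> E. S #> inv y)"
proof -
  have Ysub: "Y \<subseteq> carrier G" and Psub: "P \<subseteq> carrier G"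
    using Y P subgroup.subset by blast+
  have E_carrier: "S \<subseteq> carrier G" if "S \<in> E" for S
    using that Psub r_coset_subset_G[OF Ysub] unfolding E_def by blast
  have E_closed: "S #> x \<in> E" if "S \<in> E" "x \<in> P" for S x
    using right_coset_mult_closed[OF Y P] that unfolding E_def by blast
  have E_assoc: "S #> x #> y = S #> (x \<otimes> y)" if "S \<in> E" "x \<in> Y" "y \<in> Y" for S x y
    using coset_mult_assoc E_carrier that Ysub by blast
  have act_bij: "(\<lambda>S \<in> E. S #> inv y) \<in> Bij E" if y: "y \<in> Y" for y
  proof -
    have yc: "y \<in> carrier G" and iy: "inv y \<in> Y" using y Ysub subgroup.m_inv_closed[OF Y] by auto
    have "bij_betw (\<lambda>S \<in> E. S #> inv y) E E"
    proof (rule bij_betwI[where g = "\<lambda>S. S #> y"])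
      show "(\<lambda>S \<in> E. S #> inv y) \<in> E \<rightarrow> E" "(\<lambda>S. S #> y) \<in> E \<rightarrow> E"
        using E_closed iy y YP by auto
      show "(\<lambda>S \<in> E. S #> inv y) S #> y = S" "(\<lambda>S \<in> E. S #> inv y) (S #> y) = S"
        if "S \<in> E" for S
        using that E_closed[OF that] E_assoc[OF that] E_carrier[OF that] y iy yc YP coset_mult_one
        by (auto simp: E_assoc)
    qed
    thus ?thesis unfolding Bij_def by simp
  qed
  have "(\<lambda>y. \<lambda>S \<in> E. S #> inv y) \<in> hom (G\<lparr>carrier := Y\<rparr>) (BijGroup E)"
  proof (rule homI)
    fix x y assume "x \<in> carrier (G\<lparr>carrier := Y\<rparr>)" "y \<in> carrier (G\<lparr>carrier := Y\<rparr>)"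
    hence x: "x \<in> Y" and y: "y \<in> Y" by auto
    have "compose E (\<lambda>S \<in> E. S #> inv x) (\<lambda>S \<in> E. S #> inv y) = (\<lambda>S \<in> E. S #> inv (x \<otimes> y))"
      unfolding compose_def
    proof (rule restrict_ext)
      fix S assume S: "S \<in> E"
      have "inv x \<in> Y" "inv y \<in> Y" using x y subgroup.m_inv_closed[OF Y] by auto
      moreover have "inv (x \<otimes> y) = inv y \<otimes> inv x" using x y Ysub inv_mult_group by blast
      ultimately show "(\<lambda>S \<in> E. S #> inv x) ((\<lambda>S \<in> E. S #> inv y) S) = S #> inv (x \<otimes> y)"
        using S E_closed[OF S] E_assoc[OF S] YP by auto
    qed
    thus "(\<lambda>S \<in> E. S #> inv (x \<otimes>\<^bsub>G\<lparr>carrier := Y\<rparr>\<^esub> y)) =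
          (\<lambda>S \<in> E. S #> inv x) \<otimes>\<^bsub>BijGroup E\<^esub> (\<lambda>S \<in> E. S #> inv y)"
      using act_bij[OF x] act_bij[OF y] by (simp add: BijGroup_def)
  qed (use act_bij in \<open>simp add: BijGroup_def\<close>)
  thus ?thesis
    unfolding group_action_def group_hom_def group_hom_axioms_def
    using subgroup.subgroup_is_group[OF Y is_group] group_BijGroup by blast
qed

lemma (in group) pgroup_proper_subgroup_index:
  fixes p :: nat
  assumes P: "subgroup P G" "finite P" and p: "Factorial_Ring.prime p" "card P = p ^ k"
    and Y: "subgroup Y G" "Y \<subset> P"
  shows "p dvd card {Y #> g | g. g \<in> P}" and "\<exists>j. card Y = p ^ j"
proof -
  define E where "E = {Y #> g | g. g \<in> P}"
  have "rcosets\<^bsub>G\<lparr>carrier := P\<rparr>\<^esub> Y = E"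
    unfolding RCOSETS_def r_coset_def E_def by auto
  hence lagrange: "card E * card Y = card P"
    using group.lagrange[OF subgroup.subgroup_is_group[OF P(1) is_group] subgroup_incl[OF Y(1) P(1)]] Y(2)
    by (simp add: order_def)
  have "card E dvd p ^ k" using lagrange p(2) by (metis dvd_triv_left)
  then obtain i where i: "card E = p ^ i" using divides_primepow_nat[OF p(1)] by blast
  have "card Y < card P" using psubset_card_mono[OF P(2) Y(2)] .
  hence "i \<noteq> 0" using lagrange i by (metis less_irrefl mult_1 power_0)
  thus "p dvd card {Y #> g | g. g \<in> P}" using i unfolding E_def by (simp add: dvd_power)
  have "card Y dvd p ^ k" using lagrange p(2) by (metis dvd_triv_right)
  thus "\<exists>j. card Y = p ^ j" using divides_primepow_nat[OF p(1)] by blast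
qed

text \<open>Normalizers grow in p-groups: a proper subgroup Y of a finite p-group P is properly
  contained in its normalizer in P.  Apply the fixed-point congruence to the action of Y on
  the cosets of Y in P: the number of cosets is a positive power of p, the coset Y itself
  is fixed, so another coset Yg is fixed, and such a g normalizes Y without lying in Y.\<close>
lemma (in group) normalizer_grows_in_pgroup:
  fixes p :: nat
  assumes P: "subgroup P G" "finite P" and p: "Factorial_Ring.prime p" "card P = p ^ k"
    and Y: "subgroup Y G" "Y \<subset> P"
  shows "Y \<subset> P \<inter> normalizer G Y"
proof -
  have Ysub: "Y \<subseteq> carrier G" and Psub: "P \<subseteq> carrier G"
    using Y P subgroup.subset by blast+
  have finY: "finite Y" using Y P finite_subset by blast
  have Y_le: "Y \<subseteq> P \<inter> normalizer G Y" using Y subgroup_le_normalizer by blast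
  define E where "E = {Y #> g | g. g \<in> P}"
  define \<phi> where "\<phi> = (\<lambda>y. \<lambda>S \<in> E. S #> inv y)"
  interpret act: group_action "G\<lparr>carrier := Y\<rparr>" E \<phi>
    using right_coset_action[OF Y(1) P(1)] Y(2) unfolding E_def \<phi>_def by blast
  obtain j where j: "order (G\<lparr>carrier := Y\<rparr>) = p ^ j"
    using pgroup_proper_subgroup_index(2)[OF P p Y] by (auto simp: order_def)
  have "card E mod p = 0"
    using pgroup_proper_subgroup_index(1)[OF P p Y] unfolding E_def by simp
  moreover have "finite E" unfolding E_def using P(2) by simp
  ultimately have "card {S \<in> E. \<forall>y\<in>Y. \<phi> y S = S} mod p = 0"
    using act.card_mod_prime_eq_card_fixed[OF _ p(1) j] by simp
  moreover have Y_fixed: "Y \<in> {S \<in> E. \<forall>y\<in>Y. \<phi> y S = S}"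
  proof -
    have YE: "Y \<in> E"
      unfolding E_def using subgroup.one_closed[OF P(1)] coset_mult_one[OF Ysub] by force
    have "\<phi> y Y = Y" if y: "y \<in> Y" for y
    proof -
      have "inv y \<in> Y" using subgroup.m_inv_closed[OF Y(1) y] .
      hence "Y #> inv y = Y" using coset_join2[OF _ Y(1)] Ysub by blast
      thus ?thesis using YE unfolding \<phi>_def by simp
    qed
    thus ?thesis using YE by blast
  qed
  moreover have "(1::nat) mod p = 1" using prime_gt_1_nat[OF p(1)] by simp
  ultimately have "{S \<in> E. \<forall>y\<in>Y. \<phi> y S = S} \<noteq> {Y}" by force
  with Y_fixed have "\<exists>S \<in> E. S \<noteq> Y \<and> (\<forall>y\<in>Y. \<phi> y S = S)" by blast
  then obtain g where g: "g \<in> P" "Y #> g \<noteq> Y" and fixed: "\<forall>y\<in>Y. \<phi> y (Y #> g) = Y #> g"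
    unfolding E_def by blast
  have gc: "g \<in> carrier G" using g Psub by blast
  have "Y #> g #> y = Y #> g" if y: "y \<in> Y" for y
  proof -
    have "Y #> g \<in> E" using g(1) unfolding E_def by blast
    moreover have "\<phi> (inv y) (Y #> g) = Y #> g" using fixed subgroup.m_inv_closed[OF Y(1) y] by blast
    ultimately have "Y #> g #> inv (inv y) = Y #> g" unfolding \<phi>_def by simp
    thus ?thesis using y Ysub by auto
  qed
  hence "g \<in> normalizer G Y" using fixed_right_coset_normalizes[OF Y(1) finY gc] by blast
  moreover have "g \<notin> Y" using g(2) coset_join2[OF gc Y(1)] by blast
  ultimately show ?thesis using Y_le g(1) by blast
qed

text \<open>If T does not contain the finite normal p-subgroup P, there is a proper subgroup Y
  of P containing P \<inter> T that is normalized by both P and T: take Y maximal among the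
  proper subgroups of P containing P \<inter> T and normalized by T.  The normalizer of Y in P
  is again such a subgroup unless it is all of P, and it is strictly larger than Y, so by
  maximality it equals P.\<close>
lemma (in group) pgroup_has_invariant_normal_subgroup:
  fixes p :: nat
  assumes P: "P \<lhd> G" "finite P" and p: "Factorial_Ring.prime p" "card P = p ^ k"
    and T: "subgroup T G" and PT: "\<not> P \<subseteq> T"
  shows "\<exists>Y. subgroup Y G \<and> P \<inter> T \<subseteq> Y \<and> Y \<subset> P \<and>
             P \<subseteq> normalizer G Y \<and> T \<subseteq> normalizer G Y"
proof -
  have PS: "subgroup P G" using P(1) normal_imp_subgroup by blast
  define M where "M = {Y. subgroup Y G \<and> P \<inter> T \<subseteq> Y \<and> Y \<subset> P \<and> T \<subseteq> normalizer G Y}"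
  have "T \<subseteq> normalizer G (P \<inter> T)" using normalizes_Int_normal[OF P T] by blast
  hence "P \<inter> T \<in> M" unfolding M_def using subgroups_Inter_pair[OF PS T] PT by blast
  moreover have "finite M"
    using P(2) by (rule finite_subset[rotated, OF finite_Pow_iff[THEN iffD2]]) (auto simp: M_def)
  ultimately obtain Y where YM: "Y \<in> M" and Y_max: "\<And>Z. Z \<in> M \<Longrightarrow> Y \<subseteq> Z \<Longrightarrow> Z = Y"
    using finite_has_maximal[of M] by blast
  have Y: "subgroup Y G" "P \<inter> T \<subseteq> Y" "Y \<subset> P" and TY: "T \<subseteq> normalizer G Y"
    using YM unfolding M_def by auto
  have NY: "subgroup (normalizer G Y) G"
    using normalizer_imp_subgroup Y(1) subgroup.subset by blast
  define N where "N = P \<inter> normalizer G Y"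
  have YN: "Y \<subset> N"
    unfolding N_def using normalizer_grows_in_pgroup[OF PS P(2) p Y(1,3)] .
  have "N = P"
  proof (rule ccontr)
    assume "N \<noteq> P"
    hence "N \<subset> P" unfolding N_def by blast
    moreover have "subgroup N G" unfolding N_def using subgroups_Inter_pair[OF PS NY] .
    moreover have "T \<subseteq> normalizer G N"
      unfolding N_def using TY normalizes_Int_normal[OF P NY] by blast
    ultimately have "N \<in> M" using Y(2) YN unfolding M_def by blast
    thus False using Y_max YN by blast
  qed
  thus ?thesis using Y TY unfolding N_def by blast
qed

text \<open>The subgroup Y of the previous lemma is normalized by H and T, hence by HT = G; and
  every element ht of P has t \<in> P \<inter> T \<subseteq> Y.\<close>
lemma (in group) proper_supplement_gives_normal_subgroup:
  fixes p :: nat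
  assumes P: "P \<lhd> G" "finite P" and p: "Factorial_Ring.prime p" "card P = p ^ k"
    and HP: "H \<subseteq> P" and T: "subgroup T G" and HT: "H <#> T = carrier G"
    and T_proper: "T \<noteq> carrier G"
  shows "\<exists>Y. Y \<lhd> G \<and> Y \<subset> P \<and> P \<subseteq> H <#> Y"
proof -
  have PS: "subgroup P G" using P(1) normal_imp_subgroup by blast
  have "\<not> P \<subseteq> T"
  proof
    assume "P \<subseteq> T"
    hence "H <#> T \<subseteq> T <#> T" using HP by (intro mono_set_mult) auto
    hence "carrier G \<subseteq> T" unfolding HT subgroup_mult_id[OF T] .
    thus False using T_proper subgroup.subset[OF T] by blast
  qed
  then obtain Y where Y: "subgroup Y G" "P \<inter> T \<subseteq> Y" "Y \<subset> P"
    and norm: "P \<subseteq> normalizer G Y" "T \<subseteq> normalizer G Y"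
    using pgroup_has_invariant_normal_subgroup[OF P p T] by blast
  have Ysub: "Y \<subseteq> carrier G" using Y(1) subgroup.subset by blast
  have "carrier G \<subseteq> normalizer G Y"
  proof -
    have "H <#> T \<subseteq> normalizer G Y <#> normalizer G Y" using HP norm by (intro mono_set_mult) auto
    thus ?thesis unfolding HT subgroup_mult_id[OF normalizer_imp_subgroup[OF Ysub]] .
  qed
  moreover have "finite Y" using Y(3) P(2) finite_subset by blast
  ultimately have "\<forall>x\<in>carrier G. \<forall>y\<in>Y. x \<otimes> y \<otimes> inv x \<in> Y"
    using mem_normalizer_iff_finite[OF Ysub] by blast
  hence "Y \<lhd> G" using Y(1) normal_inv_iff by blast
  moreover have "P \<subseteq> H <#> Y"
  proof
    fix z assume z: "z \<in> P"
    hence "z \<in> H <#> T" using HT PS subgroup.subset by blast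
    then obtain h t where h: "h \<in> H" and t: "t \<in> T" and z_eq: "z = h \<otimes> t"
      unfolding set_mult_def by blast
    have hc: "h \<in> carrier G" and tc: "t \<in> carrier G"
      using h t HP PS T subgroup.subset by blast+
    have "t = inv h \<otimes> z" using z_eq hc tc by (simp add: m_assoc[symmetric])
    hence "t \<in> P" using h HP z PS by (auto simp: subgroup.m_closed subgroup.m_inv_closed)
    hence "t \<in> Y" using t Y(2) by blast
    thus "z \<in> H <#> Y" using h z_eq unfolding set_mult_def by blast
  qed
  ultimately show ?thesis using Y(3) by blast
qed

text \<open>The theorem: otherwise the normal subgroup Y above lies below R by hypothesis, so
  P \<subseteq> HY \<subseteq> HR = RH, contradicting RH \<subset> P.\<close>
theorem lemma4p5:
  fixes G (structure) and p n :: nat and P R H T :: "'a set"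
  assumes "group G" and "finite (carrier G)"
    and "Factorial_Ring.prime p"
    and "P \<lhd> G" and "\<exists>k. card P = p ^ k"
    and "R \<lhd> G" and "R \<subseteq> P"
    and "chief_factor G P R"
    and "order ((G\<lparr>carrier := P\<rparr>) Mod R) = p ^ n" and "n > 1"
    and "\<forall>V. V \<lhd> G \<and> V \<subset> P \<longrightarrow> V \<subseteq> R"
    and "subgroup H G" and "H \<subseteq> P"
    and "R \<subset> R <#> H" and "R <#> H \<subset> P"
    and "cyclic_group (subgroup_generated G H)"
    and "Factorial_Ring.prime (card H) \<or> card H = 4"
    and "subgroup T G" and "H <#> T = carrier G"
  shows "T = carrier G"
proof (rule ccontr)
  assume T_proper: "T \<noteq> carrier G"
  interpret group G by fact
  have "finite P"
    using \<open>finite (carrier G)\<close> \<open>P \<lhd> G\<close> normal_imp_subgroup subgroup.subset finite_subset by metis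
  moreover obtain k where "card P = p ^ k" using \<open>\<exists>k. card P = p ^ k\<close> ..
  ultimately obtain Y where Y: "Y \<lhd> G" "Y \<subset> P" "P \<subseteq> H <#> Y"
    using proper_supplement_gives_normal_subgroup[OF \<open>P \<lhd> G\<close> _ \<open>Factorial_Ring.prime p\<close> _
        \<open>H \<subseteq> P\<close> \<open>subgroup T G\<close> \<open>H <#> T = carrier G\<close> T_proper]
    by blast
  have "Y \<subseteq> R" using Y(1,2) \<open>\<forall>V. V \<lhd> G \<and> V \<subset> P \<longrightarrow> V \<subseteq> R\<close> by blast
  hence "P \<subseteq> H <#> R" using Y(3) mono_set_mult[of H H Y R] by blast
  also have "H <#> R = R <#> H" using commut_normal[OF \<open>subgroup H G\<close> \<open>R \<lhd> G\<close>] .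
  finally show False using \<open>R <#> H \<subset> P\<close> by blast
qed

end
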